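(* Let $x,y\in S^1\cap\mathbb{H}^2$ be distinct, let $\{x_*,y_*\}=S^1\cap\partial\mathbb{H}^2=\{-1,1\}$, labelled so that $x_*,x,y,y_*$ occur in this order on the upper unit semicircle, and let $z$ be the hyperbolic midpoint of the hyperbolic segment $J[x,y]$. Let $v=L(x,x_* )\cap L(y,y_* )$ and let $a$ be the centre of the circle through $x$ and $y$ orthogonal to $S^1$, i.e. $a=i\frac{y(1+|x|^2)-x(1+|y|^2)}{2(x_2y_1-x_1y_2)}$ where $x=x_1+ix_2$, $y=y_1+iy_2$. Then: (1) if the line $L(x,y)$ meets the real axis, at the point $w$, then the line $L(w,z)$ is tangent to the circle $S^1$; (2) the line $L(v,z)$ is orthogonal to the real axis, i.e. $\operatorname{Re}v=\operatorname{Re}z$; (3) the line $L(a,z)$ is orthogonal to the real axis, i.e. $\operatorname{Re}a=\operatorname{Re}z$; (4) writing $x_1,y_1,z_1$ for the real points $\operatorname{Re}x,\operatorname{Re}y,\operatorname{Re}z$, the angle $\angle y_1z_1y$ equals the angle $\angle x_1z_1x$.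
   Context: $\mathbb{H}^2$ is the upper half plane with boundary $\partial\mathbb{H}^2=\mathbb{R}$, $S^1$ is the unit circle. $L(p,q)$ denotes the line through $p$ and $q$. The hyperbolic distance on $\mathbb{H}^2$ satisfies $\cosh\rho(x,y)=1+\frac{|x-y|^2}{2\operatorname{Im}x\operatorname{Im}y}$; the hyperbolic segment $J[x,y]$ for $x,y\in S^1\cap\mathbb{H}^2$ is the arc of $S^1$ between $x$ and $y$, and its hyperbolic midpoint is the $z\in J[x,y]$ with $\rho(x,z)=\rho(z,y)$. $\angle pqr$ denotes the angle at $q$ between the segments $[q,p]$ and $[q,r]$. *)

theory Defs
  imports "HOL-Analysis.Analysis"
begin

definition hdist :: "complex \<Rightarrow> complex \<Rightarrow> real" where
  "hdist x y = arcosh (1 + (cmod (x - y))^2 / (2 * Im x * Im y))"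

definition hseg :: "complex \<Rightarrow> complex \<Rightarrow> complex set" where
  "hseg x y = {z. cmod z = 1 \<and> Im z > 0 \<and> Re z \<in> closed_segment (Re x) (Re y)}"

definition is_hmidpoint :: "complex \<Rightarrow> complex \<Rightarrow> complex \<Rightarrow> bool" where
  "is_hmidpoint x y z \<longleftrightarrow> z \<in> hseg x y \<and> hdist x z = hdist z y"

definition Lline :: "complex \<Rightarrow> complex \<Rightarrow> complex set" where
  "Lline p q = {p + complex_of_real t * (q - p) | t. True}"

definition tangent_to_circle :: "complex set \<Rightarrow> complex \<Rightarrow> real \<Rightarrow> bool" where
  "tangent_to_circle L c r \<longleftrightarrow> (\<exists>!p. p \<in> L \<and> dist p c = r)"

definition angle :: "complex \<Rightarrow> complex \<Rightarrow> complex \<Rightarrow> real" where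
  "angle p q r = arccos (inner (p - q) (r - q) / (norm (p - q) * norm (r - q)))"

end

theory Submission
  imports Defs
begin

text \<open>Write \<open>D = Im (cnj x * y)\<close>, which is nonzero for distinct points of the upper unit
  semicircle. On the unit circle the hyperbolic midpoint condition becomes linear in \<open>z\<close>:
  \<open>Re z * D = Im y - Im x\<close>. The point \<open>v\<close> and the centre \<open>a\<close> satisfy the same linear relation,
  while the real point \<open>w\<close> of the chord satisfies \<open>Re w * (Im y - Im x) = D\<close>, so
  \<open>Re w * Re z = 1\<close>: \<open>w\<close> lies on the polar of \<open>z\<close>, i.e. \<open>L(w,z)\<close> is tangent at \<open>z\<close>.
  Finally the relation gives \<open>(Re y - Re z) Im x = (Re z - Re x) Im y\<close>, so the right triangles
  at \<open>Re x\<close> and \<open>Re y\<close> with common vertex \<open>Re z\<close> are similar.\<close>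

lemma unit_circle_Re_Im:
  assumes "cmod x = 1"
  shows "(Re x)\<^sup>2 + (Im x)\<^sup>2 = 1"
  using assms cmod_power2[of x] by simp

lemma arcosh_real_eq_iff:
  fixes x y :: real
  assumes "1 \<le> x" "1 \<le> y"
  shows "arcosh x = arcosh y \<longleftrightarrow> x = y"
  using arcosh_less_iff_real[OF assms] arcosh_less_iff_real[OF assms(2,1)]
  by (cases x y rule: linorder_cases) auto

lemma hdist_eq_iff:
  assumes "Im x > 0" "Im y > 0" "Im z > 0"
  shows "hdist x z = hdist z y \<longleftrightarrow> (cmod (x - z))\<^sup>2 * Im y = (cmod (z - y))\<^sup>2 * Im x"
proof -
  have "hdist x z = hdist z y \<longleftrightarrow>
        (cmod (x - z))\<^sup>2 / (2 * Im x * Im z) = (cmod (z - y))\<^sup>2 / (2 * Im z * Im y)"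
    unfolding hdist_def using assms by (subst arcosh_real_eq_iff) auto
  also have "\<dots> \<longleftrightarrow> (cmod (x - z))\<^sup>2 * Im y = (cmod (z - y))\<^sup>2 * Im x"
    using assms by (simp add: field_simps)
  finally show ?thesis .
qed

lemma unit_circle_hdist_eq_iff:
  assumes "cmod x = 1" "Im x > 0" "cmod y = 1" "Im y > 0" "cmod z = 1" "Im z > 0"
  shows "hdist x z = hdist z y \<longleftrightarrow> Re z * Im (cnj x * y) = Im y - Im x"
proof -
  have "(cmod (x - z))\<^sup>2 * Im y = (cmod (z - y))\<^sup>2 * Im x \<longleftrightarrow>
        Re z * Im (cnj x * y) = Im y - Im x"
    using unit_circle_Re_Im[of x] unit_circle_Re_Im[of y] unit_circle_Re_Im[of z] assms
    unfolding cmod_power2 by simp algebra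
  with hdist_eq_iff assms show ?thesis by simp
qed

lemma Im_cnj_mult_neq_0:
  assumes "cmod x = 1" "Im x > 0" "cmod y = 1" "Im y > 0" "x \<noteq> y"
  shows "Im (cnj x * y) \<noteq> 0"
proof
  define u where "u = cnj x * y"
  assume "Im (cnj x * y) = 0"
  moreover have "cmod u = 1"
    using assms by (simp add: u_def norm_mult)
  ultimately have "u = 1 \<or> u = -1"
    by (auto simp: u_def cmod_eq_Re complex_eq_iff abs_if split: if_splits)
  moreover have "y = x * u"
    using assms(1) by (simp add: u_def mult.assoc[symmetric] complex_norm_square[symmetric])
  ultimately have "y = x \<or> y = - x" by auto
  with assms show False by auto
qed

lemma Re_Lline_real_point:
  assumes "w \<in> Lline x y" "Im w = 0"
  shows "Re w * (Im y - Im x) = Im (cnj x * y)"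
proof -
  obtain t where w: "w = x + complex_of_real t * (y - x)"
    using assms(1) unfolding Lline_def by blast
  have "t * (Im y - Im x) = - Im x"
    using arg_cong[OF w, of Im] assms(2) by (simp add: algebra_simps)
  have "Re w * (Im y - Im x) = Re x * (Im y - Im x) + (Re y - Re x) * (t * (Im y - Im x))"
    unfolding w by (simp add: algebra_simps)
  also have "\<dots> = Im (cnj x * y)"
    unfolding \<open>t * (Im y - Im x) = - Im x\<close> by (simp add: algebra_simps)
  finally show ?thesis .
qed

lemma tangent_to_circle_Lline:
  assumes "dist z c = r" "orthogonal (z - c) (w - z)" "w \<noteq> z"
  shows "tangent_to_circle (Lline w z) c r"
  unfolding tangent_to_circle_def
proof (rule ex1I[of _ z])
  show "z \<in> Lline w z \<and> dist z c = r"
    using assms(1) unfolding Lline_def by (auto intro: exI[of _ 1])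
next
  fix p assume "p \<in> Lline w z \<and> dist p c = r"
  then obtain s where p: "p = w + complex_of_real s * (z - w)" and "dist p c = r"
    unfolding Lline_def by blast
  have decomp: "p - c = (z - c) + (1 - s) *\<^sub>R (w - z)"
    unfolding p scaleR_conv_of_real by (simp add: algebra_simps)
  have "orthogonal (z - c) ((1 - s) *\<^sub>R (w - z))"
    using assms(2) by (simp add: orthogonal_clauses)
  then have "(norm (p - c))\<^sup>2 = (norm (z - c))\<^sup>2 + (norm ((1 - s) *\<^sub>R (w - z)))\<^sup>2"
    unfolding decomp by (rule norm_add_Pythagorean)
  then have "(norm (p - c))\<^sup>2 = r\<^sup>2 + ((1 - s) * norm (w - z))\<^sup>2"
    using assms(1) by (simp add: dist_norm power_mult_distrib)
  then have "s = 1"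
    using \<open>dist p c = r\<close> assms(3) by (simp add: dist_norm)
  then show "p = z" using p by simp
qed

lemma tangent_to_unit_circle_Lline:
  assumes "cmod z = 1" "Im z \<noteq> 0" "Im w = 0" "Re w * Re z = 1"
  shows "tangent_to_circle (Lline w z) 0 1"
proof (rule tangent_to_circle_Lline)
  show "orthogonal (z - 0) (w - z)"
    using assms unit_circle_Re_Im[OF assms(1)]
    by (simp add: orthogonal_def inner_complex_def algebra_simps power2_eq_square)
  show "w \<noteq> z" using assms(2,3) by auto
qed (use assms(1) in simp)

lemma abs_Re_less_1:
  assumes "cmod x = 1" "Im x > 0"
  shows "\<bar>Re x\<bar> < 1"
proof -
  have "(Re x)\<^sup>2 < 1"
    using unit_circle_Re_Im[OF assms(1)] assms(2) by (smt (verit) zero_less_power2)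
  then show ?thesis by (simp add: abs_square_less_1)
qed

lemma Re_Lline_endpoints_inter:
  assumes "cmod x = 1" "Im x > 0" "cmod y = 1" "Im y > 0"
    and "v \<in> Lline x (-1) \<inter> Lline y 1"
  shows "Re v * Im (cnj x * y) = Im y - Im x"
proof -
  obtain t s where vt: "v = x + complex_of_real t * (-1 - x)"
    and vs: "v = y + complex_of_real s * (1 - y)"
    using assms(5) unfolding Lline_def by blast
  define d where "d = Im x * (1 - Re y) + Im y * (1 + Re x)"
  have "d > 0"
    using abs_Re_less_1[of x] abs_Re_less_1[of y] assms(1-4)
    unfolding d_def by (simp add: add_pos_pos)
  have "(Re v + 1) * Im x = Im v * (1 + Re x)"
    unfolding vt by (simp add: algebra_simps)
  moreover have "(Re v - 1) * Im y = - Im v * (1 - Re y)"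
    unfolding vs by (simp add: algebra_simps)
  ultimately have "Re v * d = (1 + Re x) * Im y - (1 - Re y) * Im x"
    unfolding d_def by algebra
  moreover have "((1 + Re x) * Im y - (1 - Re y) * Im x) * Im (cnj x * y) = (Im y - Im x) * d"
    using unit_circle_Re_Im[of x] unit_circle_Re_Im[of y] assms(1,3)
    unfolding d_def by simp algebra
  ultimately show ?thesis
    using \<open>d > 0\<close> by (metis mult.commute mult.left_commute mult_cancel_left less_irrefl)
qed

lemma Re_Lline_antipodal_endpoints_inter:
  assumes "cmod x = 1" "Im x > 0" "cmod y = 1" "Im y > 0"
    and "xs \<in> {-1, 1}" "v \<in> Lline x xs \<inter> Lline y (- xs)"
  shows "Re v * Im (cnj x * y) = Im y - Im x"
  using assms(5)
proof (elim insertE emptyE)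
  assume "xs = -1"
  then show ?thesis
    using Re_Lline_endpoints_inter[OF assms(1-4)] assms(6) by simp
next
  assume "xs = 1"
  then have "Re v * Im (cnj y * x) = Im x - Im y"
    using Re_Lline_endpoints_inter[OF assms(3,4,1,2)] assms(6) by auto
  then show ?thesis by (simp add: algebra_simps)
qed

lemma Re_orthogonal_circle_centre:
  assumes "cmod x = 1" "cmod y = 1"
  shows "Re (\<i> * (y * (1 + (cmod x)^2) - x * (1 + (cmod y)^2))
               / (2 * (Im x * Re y - Re x * Im y)))
         = (Im y - Im x) / Im (cnj x * y)"
  using assms by (simp add: Re_divide_of_real) (simp add: divide_simps algebra_simps)

lemma square_div_abs_mult:
  fixes a S :: real
  shows "a\<^sup>2 / (\<bar>a\<bar> * S) = \<bar>a\<bar> / S"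
  by (metis power2_abs power2_eq_square mult_divide_mult_cancel_left_if div_0 mult_zero_left)

lemma angle_real_foot:
  "angle (complex_of_real (Re p)) (complex_of_real c) p
     = arccos (\<bar>Re p - c\<bar> / cmod (p - complex_of_real c))"
proof -
  have "inner (complex_of_real (Re p) - complex_of_real c) (p - complex_of_real c) = (Re p - c)\<^sup>2"
    by (simp add: inner_complex_def power2_eq_square)
  moreover have "norm (complex_of_real (Re p) - complex_of_real c) = \<bar>Re p - c\<bar>"
    by (metis norm_of_real of_real_diff)
  ultimately show ?thesis
    unfolding angle_def by (simp only: square_div_abs_mult)
qed

lemma angle_real_foot_eq:
  assumes "Im p > 0" "Im q > 0" "(Re q - c) * Im p = (c - Re p) * Im q"
  shows "angle (complex_of_real (Re q)) (complex_of_real c) q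
       = angle (complex_of_real (Re p)) (complex_of_real c) p"
proof -
  define k where "k = Im q / Im p"
  have "k > 0" using assms(1,2) by (simp add: k_def)
  have Re_q: "Re q - c = - k * (Re p - c)"
    using assms by (simp add: k_def field_simps)
  have "q - complex_of_real c = - complex_of_real k * cnj (p - complex_of_real c)"
    using Re_q assms(1) by (simp add: complex_eq_iff k_def)
  then have "cmod (q - complex_of_real c) = k * cmod (p - complex_of_real c)"
    using \<open>k > 0\<close> by (simp add: norm_mult del: complex_cnj_diff)
  moreover have "\<bar>Re q - c\<bar> = k * \<bar>Re p - c\<bar>"
    using Re_q \<open>k > 0\<close> by (simp add: abs_mult)
  ultimately show ?thesis
    using \<open>k > 0\<close> by (simp add: angle_real_foot)
qed

lemma unit_circle_Re_balance:
  assumes "cmod x = 1" "cmod y = 1"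
    and "c * Im (cnj x * y) = Im y - Im x" "Im (cnj x * y) \<noteq> 0"
  shows "(Re y - c) * Im x = (c - Re x) * Im y"
proof -
  have "((Re y - c) * Im x - (c - Re x) * Im y) * Im (cnj x * y) = 0"
    using unit_circle_Re_Im[OF assms(1)] unit_circle_Re_Im[OF assms(2)] assms(3) by simp algebra
  then show ?thesis
    using assms(4) by simp
qed

theorem lemma3p1:
  fixes x y xs ys z v a :: complex
  assumes hx: "cmod x = 1" "Im x > 0"
      and hy: "cmod y = 1" "Im y > 0"
      and hxy: "x \<noteq> y"
      and hends: "xs \<in> {-1, 1}" "ys = - xs"
      and horder: "(Re xs < Re x \<and> Re x < Re y \<and> Re y < Re ys) \<or>
                   (Re xs > Re x \<and> Re x > Re y \<and> Re y > Re ys)"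
      and hz: "is_hmidpoint x y z"
      and hv: "v \<in> Lline x xs \<inter> Lline y ys"
      and ha: "a = \<i> * (y * (1 + (cmod x)^2) - x * (1 + (cmod y)^2))
                     / (2 * (Im x * Re y - Re x * Im y))"
  shows "(\<forall>w. Im w = 0 \<and> w \<in> Lline x y \<longrightarrow> tangent_to_circle (Lline w z) 0 1)
       \<and> Re v = Re z
       \<and> Re a = Re z
       \<and> angle (complex_of_real (Re y)) (complex_of_real (Re z)) y
           = angle (complex_of_real (Re x)) (complex_of_real (Re z)) x"
proof -
  have z: "cmod z = 1" "Im z > 0" and "hdist x z = hdist z y"
    using hz unfolding is_hmidpoint_def hseg_def by auto
  have D: "Im (cnj x * y) \<noteq> 0"
    using Im_cnj_mult_neq_0[OF hx hy hxy] .
  have z_eq: "Re z * Im (cnj x * y) = Im y - Im x"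
    using unit_circle_hdist_eq_iff[OF hx hy z] \<open>hdist x z = hdist z y\<close> by simp
  have "tangent_to_circle (Lline w z) 0 1" if "Im w = 0" "w \<in> Lline x y" for w
  proof (rule tangent_to_unit_circle_Lline)
    show "Re w * Re z = 1"
      using Re_Lline_real_point[OF that(2,1)] z_eq D
      by (metis mult.assoc mult.commute mult_cancel_right1)
  qed (use z that in auto)
  moreover have "Re v = Re z"
    using Re_Lline_antipodal_endpoints_inter[OF hx hy hends(1)] hv hends(2) z_eq D
    by (metis mult_right_cancel)
  moreover have "Re a = Re z"
    unfolding ha Re_orthogonal_circle_centre[OF hx(1) hy(1)] using z_eq D by (simp add: divide_eq_eq)
  moreover have "angle (complex_of_real (Re y)) (complex_of_real (Re z)) y
               = angle (complex_of_real (Re x)) (complex_of_real (Re z)) x"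
    using angle_real_foot_eq[OF hx(2) hy(2) unit_circle_Re_balance[OF hx(1) hy(1) z_eq D]] .
  ultimately show ?thesis
    by blast
qed

end
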